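(* Let $K$ be an $\mathbb N$-valued random variable with $\Pr(K=k)=k^{-5/4}/c$ for $k\in\mathbb N$ ($c$ a normalizing constant), and let $(K_i)_{i\in\mathbb N}$ be i.i.d. copies of $K$. Then for almost every realization $(k_i)$ there is $i_0$ such that (1) every record-time $i\geq i_0$ is simple, and (2) $\max\{k_1,\ldots,k_i\}>i$ for all $i\geq i_0$.
   Context: For a sequence $(k_i)_{i\in\mathbb N}$ of natural numbers, $i$ is a record-time if $k_i>k_j$ for all $j<i$, and a non-strict record-time if $k_i\geq k_j$ for all $j<i$. A record-time $i$ is simple if $k_i<k_j$ for every non-strict record-time $j>i$. *)

theory Defs
  imports "HOL-Probability.Probability"
begin

(* Sequences are indexed from 0: k 0, k 1, k 2, ... ; the paper's k_1, k_2, ... *)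

definition record_time :: "(nat \<Rightarrow> nat) \<Rightarrow> nat \<Rightarrow> bool" where
  "record_time k i \<longleftrightarrow> (\<forall>j<i. k j < k i)"

definition nonstrict_record_time :: "(nat \<Rightarrow> nat) \<Rightarrow> nat \<Rightarrow> bool" where
  "nonstrict_record_time k i \<longleftrightarrow> (\<forall>j<i. k j \<le> k i)"

definition simple_record_time :: "(nat \<Rightarrow> nat) \<Rightarrow> nat \<Rightarrow> bool" where
  "simple_record_time k i \<longleftrightarrow> record_time k i \<and>
     (\<forall>j>i. nonstrict_record_time k j \<longrightarrow> k i < k j)"

definition zeta54 :: real where
  "zeta54 = (\<Sum>k. real (Suc k) powr (-5/4))"

end

theory Submission
  imports Defs
begin

text \<open>
  Let p(v) = v powr (-5/4) / zeta54. A record at time i that is not simple has its value v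
  repeated at a later non-strict record time j. Once some value before each time t exceeds t,
  this forces v > j, so v occurs twice before time v, the first time as a record. By
  independence this has probability at most v p(v)^2 / s, where s \<ge> v p(v) / 4 is the
  probability of a value \<ge> v (the values in [v, 2v) alone contribute that much); so it is
  O(p(v)), which is summable. Similarly K 0, ..., K (v - 1) all lie below 2v with probability
  at most (1 - v p(v) / 8)^v \<le> exp (-c v^(3/4)) = O(v^(-3/2)). By Borel--Cantelli, almost surely
  both events happen for only finitely many v.
\<close>

subsection \<open>Records\<close>

definition repeated_record_value :: "(nat \<Rightarrow> nat) \<Rightarrow> nat \<Rightarrow> bool" where
  "repeated_record_value k v \<longleftrightarrow> (\<exists>j<v. \<exists>i<j. k i = v \<and> k j = v \<and> (\<forall>l<i. k l < v))"

lemma eventually_Max_gt: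
  fixes k :: "nat \<Rightarrow> nat"
  assumes "\<forall>\<^sub>F i in sequentially. \<exists>n<i. i < k n"
  shows "\<forall>\<^sub>F i in sequentially. i < Max (k ` {..<i})"
  using assms by (rule eventually_mono) (auto intro: less_le_trans Max_ge)

lemma eventually_record_time_simple:
  fixes k :: "nat \<Rightarrow> nat"
  assumes no_repeat: "\<forall>\<^sub>F v in sequentially. \<not> repeated_record_value k v"
    and large: "\<forall>\<^sub>F i in sequentially. \<exists>n<i. i < k n"
  shows "\<forall>\<^sub>F i in sequentially. record_time k i \<longrightarrow> simple_record_time k i"
proof -
  obtain N where N: "\<And>v. N \<le> v \<Longrightarrow> \<not> repeated_record_value k v"
    and N': "\<And>i. N \<le> i \<Longrightarrow> \<exists>n<i. i < k n"
    using eventually_conj[OF no_repeat large] unfolding eventually_sequentially by blast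
  have "simple_record_time k i" if i: "N \<le> i" and rec: "record_time k i" for i
    unfolding simple_record_time_def
  proof (intro conjI rec allI impI)
    fix j assume ij: "i < j" and nrec: "nonstrict_record_time k j"
    show "k i < k j"
    proof (rule ccontr)
      assume "\<not> k i < k j"
      with nrec ij have eq: "k j = k i" unfolding nonstrict_record_time_def by fastforce
      obtain n where "n < j" "j < k n" using N'[of j] i ij by auto
      with nrec eq have "j < k i" unfolding nonstrict_record_time_def by fastforce
      with ij eq rec have "repeated_record_value k (k i)"
        unfolding repeated_record_value_def record_time_def by blast
      with N[of "k i"] \<open>j < k i\<close> i ij show False by linarith
    qed
  qed
  then show ?thesis unfolding eventually_sequentially by blast
qed

subsection \<open>Independent sequences of natural numbers\<close>

lemma geometric_sum_le:
  fixes s :: real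
  assumes "0 < s" "s \<le> 1"
  shows "(\<Sum>i<n. (1 - s) ^ i) \<le> 1 / s"
proof -
  have "(\<Sum>i<n. (1 - s) ^ i) = (1 - (1 - s) ^ n) / s"
    using assms by (simp add: sum_gp_strict)
  also have "\<dots> \<le> 1 / s"
    using assms by (intro divide_right_mono) auto
  finally show ?thesis .
qed

locale indep_nat_sequence = prob_space M for M :: "'a measure" +
  fixes K :: "nat \<Rightarrow> 'a \<Rightarrow> nat"
  assumes indep: "indep_vars (\<lambda>_. count_space UNIV) K UNIV"
begin

lemma measurable_K [measurable]: "K i \<in> measurable M (count_space UNIV)"
  using indep unfolding indep_vars_def2 by auto

lemma prob_all_in_eq_prod:
  assumes "finite J"
  shows "prob {\<omega> \<in> space M. \<forall>l\<in>J. K l \<omega> \<in> S l} = (\<Prod>l\<in>J. prob {\<omega> \<in> space M. K l \<omega> \<in> S l})"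
proof (cases "J = {}")
  case True
  then show ?thesis by (simp add: prob_space)
next
  case False
  have "indep_sets (\<lambda>i. {K i -` A \<inter> space M | A. A \<in> sets (count_space UNIV)}) UNIV"
    using indep unfolding indep_vars_def2 by auto
  then have "prob (\<Inter>l\<in>J. K l -` S l \<inter> space M) = (\<Prod>l\<in>J. prob (K l -` S l \<inter> space M))"
    by (rule indep_setsD) (use assms False in auto)
  moreover have "(\<Inter>l\<in>J. K l -` S l \<inter> space M) = {\<omega> \<in> space M. \<forall>l\<in>J. K l \<omega> \<in> S l}"
    using False by auto
  ultimately show ?thesis by (simp add: vimage_def Int_def conj_commute)
qed

lemma prob_all_less_le:
  assumes "\<And>l. prob {\<omega> \<in> space M. K l \<omega> < b} \<le> r"
  shows "prob {\<omega> \<in> space M. \<forall>n<m. K n \<omega> < b} \<le> r ^ m"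
proof -
  have "{\<omega> \<in> space M. \<forall>n<m. K n \<omega> < b} = {\<omega> \<in> space M. \<forall>n\<in>{..<m}. K n \<omega> \<in> {..<b}}"
    by auto
  then have "prob {\<omega> \<in> space M. \<forall>n<m. K n \<omega> < b} = (\<Prod>n<m. prob {\<omega> \<in> space M. K n \<omega> \<in> {..<b}})"
    by (simp only: prob_all_in_eq_prod[OF finite_lessThan])
  also have "\<dots> \<le> (\<Prod>n<m. r)"
    using assms by (intro prod_mono) auto
  finally show ?thesis by simp
qed

lemma prob_first_record_and_repeat_le:
  assumes "i < j" and eq: "\<And>l. prob {\<omega> \<in> space M. K l \<omega> = v} \<le> q"
    and less: "\<And>l. prob {\<omega> \<in> space M. K l \<omega> < v} \<le> r"
  shows "prob {\<omega> \<in> space M. K i \<omega> = v \<and> K j \<omega> = v \<and> (\<forall>l<i. K l \<omega> < v)} \<le> q * q * r ^ i"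
proof -
  define S where "S l = (if l = i \<or> l = j then {v} else {..<v})" for l
  have "{\<omega> \<in> space M. K i \<omega> = v \<and> K j \<omega> = v \<and> (\<forall>l<i. K l \<omega> < v)} =
      {\<omega> \<in> space M. \<forall>l\<in>insert i (insert j {..<i}). K l \<omega> \<in> S l}"
    using \<open>i < j\<close> by (auto simp: S_def)
  also have "prob \<dots> = prob {\<omega> \<in> space M. K i \<omega> = v} * prob {\<omega> \<in> space M. K j \<omega> = v} *
      (\<Prod>l<i. prob {\<omega> \<in> space M. K l \<omega> < v})"
    using \<open>i < j\<close> by (subst prob_all_in_eq_prod) (auto simp: S_def)
  also have "\<dots> \<le> q * q * (\<Prod>l<i. r)"
    using eq less order_trans[OF measure_nonneg eq] by (intro mult_mono prod_mono prod_nonneg) auto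
  finally show ?thesis by simp
qed

lemma prob_repeated_record_value_le:
  assumes eq: "\<And>l. prob {\<omega> \<in> space M. K l \<omega> = v} \<le> q"
    and less: "\<And>l. prob {\<omega> \<in> space M. K l \<omega> < v} \<le> 1 - s" and "0 < s"
  shows "prob {\<omega> \<in> space M. repeated_record_value (\<lambda>n. K n \<omega>) v} \<le> v * q\<^sup>2 / s"
proof -
  define G where "G i j = {\<omega> \<in> space M. K i \<omega> = v \<and> K j \<omega> = v \<and> (\<forall>l<i. K l \<omega> < v)}" for i j
  have G_events: "G i j \<in> events" for i j
    unfolding G_def by measurable
  have "s \<le> 1" using order_trans[OF measure_nonneg less] by simp
  have "{\<omega> \<in> space M. repeated_record_value (\<lambda>n. K n \<omega>) v} = (\<Union>j<v. \<Union>i<j. G i j)"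
    unfolding repeated_record_value_def G_def by auto
  also have "prob \<dots> \<le> (\<Sum>j<v. prob (\<Union>i<j. G i j))"
    by (rule finite_measure_subadditive_finite) (auto intro: G_events)
  also have "\<dots> \<le> (\<Sum>j<v. \<Sum>i<j. prob (G i j))"
    by (intro sum_mono finite_measure_subadditive_finite) (auto intro: G_events)
  also have "\<dots> \<le> (\<Sum>j<v. \<Sum>i<j. q * q * (1 - s) ^ i)"
    unfolding G_def by (intro sum_mono prob_first_record_and_repeat_le eq less) auto
  also have "\<dots> \<le> (\<Sum>j<v. q * q * (1 / s))"
  proof (intro sum_mono)
    fix j
    have "0 \<le> q" using order_trans[OF measure_nonneg eq] .
    with geometric_sum_le[OF \<open>0 < s\<close> \<open>s \<le> 1\<close>, of j]
    have "q * q * (\<Sum>i<j. (1 - s) ^ i) \<le> q * q * (1 / s)"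
      by (intro mult_left_mono) auto
    then show "(\<Sum>i<j. q * q * (1 - s) ^ i) \<le> q * q * (1 / s)"
      by (simp add: sum_distrib_left)
  qed
  also have "\<dots> = v * q\<^sup>2 / s" by (simp add: power2_eq_square)
  finally show ?thesis .
qed

lemma AE_eventually_not_of_summable:
  assumes "\<And>n. A n \<in> events" "\<forall>\<^sub>F n in sequentially. prob (A n) \<le> b n" "summable b"
  shows "AE \<omega> in M. \<forall>\<^sub>F n in sequentially. \<omega> \<notin> A n"
proof -
  have "\<forall>\<^sub>F n in sequentially. norm (prob (A n)) \<le> b n"
    using assms(2) by (rule eventually_mono) simp
  then have "summable (\<lambda>n. prob (A n))"
    using assms(3) by (rule summable_comparison_test_ev)
  with assms(1) have "AE \<omega> in M. \<forall>\<^sub>F n in sequentially. \<omega> \<in> space M - A n"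
    by (intro borel_cantelli_AE1) (auto simp: emeasure_eq_measure)
  then show ?thesis
    by (rule AE_mp) (auto intro!: AE_I2 elim: eventually_mono)
qed

end

subsection \<open>The power law with exponent 5/4\<close>

definition power_law_pmf :: "nat \<Rightarrow> real" where
  "power_law_pmf k = real k powr (-5/4) / zeta54"

lemma zeta54_pos: "0 < zeta54"
proof -
  have "summable (\<lambda>n. real (Suc n) powr (-5/4))"
    using summable_Suc_iff[of "\<lambda>n. real n powr (-5/4)"] by (simp add: summable_real_powr_iff)
  then show ?thesis unfolding zeta54_def by (intro suminf_pos) auto
qed

lemma summable_power_law_pmf: "summable power_law_pmf"
  unfolding power_law_pmf_def by (intro summable_divide) (simp add: summable_real_powr_iff)

lemma power_law_pmf_pos: "1 \<le> k \<Longrightarrow> 0 < power_law_pmf k"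
  using zeta54_pos by (simp add: power_law_pmf_def)

lemma power_law_pmf_antimono: "1 \<le> k \<Longrightarrow> k \<le> m \<Longrightarrow> power_law_pmf m \<le> power_law_pmf k"
  unfolding power_law_pmf_def using zeta54_pos by (intro divide_right_mono powr_mono2') auto

lemma power_law_pmf_double: "power_law_pmf v / 4 \<le> power_law_pmf (2 * v)"
proof -
  have "(2::real) powr (-2) \<le> 2 powr (-5/4)" by (intro powr_mono) auto
  then have "1 / 4 \<le> (2::real) powr (-5/4)" by (simp add: powr_minus powr_realpow)
  then have "real v powr (-5/4) * (1 / 4) \<le> real v powr (-5/4) * 2 powr (-5/4)"
    by (rule mult_left_mono) simp
  then have "real v powr (-5/4) / 4 / zeta54 \<le> 2 powr (-5/4) * real v powr (-5/4) / zeta54"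
    using zeta54_pos by (intro divide_right_mono) (simp_all add: mult.commute)
  then show ?thesis
    unfolding power_law_pmf_def by (simp add: powr_mult)
qed

lemma power_law_pmf_times_square: "real v ^ 2 * power_law_pmf v = real v powr (3/4) / zeta54"
proof (cases "v = 0")
  case False
  then have "real v ^ 2 * real v powr (-5/4) = real v powr 2 * real v powr (-5/4)"
    by (simp add: powr_numeral)
  also have "\<dots> = real v powr (2 + -5/4)"
    by (rule powr_add[symmetric])
  finally show ?thesis by (simp add: power_law_pmf_def)
qed simp

lemma exp_neg_le:
  fixes x :: real
  assumes "0 < x"
  shows "exp (- x) \<le> 4 / x\<^sup>2"
proof -
  have "x / 2 \<le> exp (x / 2)" using exp_ge_add_one_self[of "x / 2"] by linarith
  with \<open>0 < x\<close> have "(x / 2) * (x / 2) \<le> exp (x / 2) * exp (x / 2)"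
    by (intro mult_mono) auto
  then have "x\<^sup>2 / 4 \<le> exp x" by (simp add: power2_eq_square flip: exp_add)
  with \<open>0 < x\<close> show ?thesis by (simp add: exp_minus field_simps)
qed

lemma one_minus_power_le:
  fixes x :: real
  assumes "0 < x" "x \<le> 1" "0 < n"
  shows "(1 - x) ^ n \<le> 4 / (n * x)\<^sup>2"
proof -
  have "(1 - x) ^ n \<le> exp (- x) ^ n"
    using assms exp_ge_add_one_self[of "- x"] by (intro power_mono) auto
  also have "\<dots> = exp (- (n * x))" by (simp flip: exp_of_nat_mult)
  also have "\<dots> \<le> 4 / (n * x)\<^sup>2" using assms by (intro exp_neg_le) simp
  finally show ?thesis .
qed

locale power_law_sequence = indep_nat_sequence +
  assumes prob_K_eq: "1 \<le> k \<Longrightarrow> prob {\<omega> \<in> space M. K i \<omega> = k} = power_law_pmf k"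
begin

lemma prob_K_interval_ge:
  assumes "1 \<le> v"
  shows "v * power_law_pmf v / 4 \<le> prob {\<omega> \<in> space M. K l \<omega> \<in> {v..<2 * v}}"
proof -
  have "{\<omega> \<in> space M. K l \<omega> \<in> {v..<2 * v}} = (\<Union>k\<in>{v..<2 * v}. {\<omega> \<in> space M. K l \<omega> = k})"
    by auto
  also have "prob \<dots> = (\<Sum>k\<in>{v..<2 * v}. prob {\<omega> \<in> space M. K l \<omega> = k})"
    by (intro measure_finite_Union) (auto simp: disjoint_family_on_def)
  also have "\<dots> \<ge> (\<Sum>k\<in>{v..<2 * v}. power_law_pmf (2 * v))"
    using assms by (intro sum_mono) (auto simp: prob_K_eq intro: power_law_pmf_antimono)
  finally have "v * power_law_pmf (2 * v) \<le> prob {\<omega> \<in> space M. K l \<omega> \<in> {v..<2 * v}}"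
    by simp
  moreover have "v * (power_law_pmf v / 4) \<le> v * power_law_pmf (2 * v)"
    by (intro mult_left_mono power_law_pmf_double) auto
  ultimately show ?thesis by simp
qed

lemma prob_K_less_le:
  assumes "1 \<le> v"
  shows "prob {\<omega> \<in> space M. K l \<omega> < v} \<le> 1 - v * power_law_pmf v / 4"
proof -
  have "prob {\<omega> \<in> space M. K l \<omega> < v} + prob {\<omega> \<in> space M. K l \<omega> \<in> {v..<2 * v}} =
      prob ({\<omega> \<in> space M. K l \<omega> < v} \<union> {\<omega> \<in> space M. K l \<omega> \<in> {v..<2 * v}})"
    by (subst finite_measure_Union) auto
  also have "\<dots> \<le> 1" by (rule prob_le_1)
  finally show ?thesis using prob_K_interval_ge[OF assms, of l] by linarith
qed

lemma prob_repeated_record_value_le_power_law: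
  assumes "1 \<le> v"
  shows "prob {\<omega> \<in> space M. repeated_record_value (\<lambda>n. K n \<omega>) v} \<le> 4 * power_law_pmf v"
proof -
  have "0 < v * power_law_pmf v / 4" using assms power_law_pmf_pos[OF assms] by simp
  with assms have "prob {\<omega> \<in> space M. repeated_record_value (\<lambda>n. K n \<omega>) v}
      \<le> v * (power_law_pmf v)\<^sup>2 / (v * power_law_pmf v / 4)"
    by (intro prob_repeated_record_value_le prob_K_less_le) (simp_all add: prob_K_eq)
  also have "\<dots> = 4 * power_law_pmf v"
    using assms power_law_pmf_pos[OF assms] by (simp add: power2_eq_square)
  finally show ?thesis .
qed

lemma prob_all_less_double_le:
  assumes "1 \<le> v"
  shows "prob {\<omega> \<in> space M. \<forall>n<v. K n \<omega> < 2 * v} \<le> 256 * zeta54\<^sup>2 * real v powr (-3/2)"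
proof -
  define x where "x = v * power_law_pmf v / 8"
  have "0 < x" using assms power_law_pmf_pos[OF assms] by (simp add: x_def)
  have "x \<le> 2 * v * power_law_pmf (2 * v) / 4"
    using mult_left_mono[OF power_law_pmf_double[of v], of "real v"] by (simp add: x_def)
  moreover have "2 * v * power_law_pmf (2 * v) / 4 \<le> 1"
    using order_trans[OF measure_nonneg prob_K_less_le[of "2 * v" 0]] assms by simp
  ultimately have "x \<le> 1" and less: "prob {\<omega> \<in> space M. K l \<omega> < 2 * v} \<le> 1 - x" for l
    using prob_K_less_le[of "2 * v" l] assms by simp_all
  have "prob {\<omega> \<in> space M. \<forall>n<v. K n \<omega> < 2 * v} \<le> (1 - x) ^ v"
    using less by (rule prob_all_less_le)
  also have "\<dots> \<le> 4 / (v * x)\<^sup>2"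
    using \<open>0 < x\<close> \<open>x \<le> 1\<close> assms by (intro one_minus_power_le) auto
  also have "v * x = real v powr (3/4) / (8 * zeta54)"
    using power_law_pmf_times_square[of v] by (simp add: x_def power2_eq_square)
  also have "4 / (real v powr (3/4) / (8 * zeta54))\<^sup>2 = 4 * (8 * zeta54)\<^sup>2 / (real v powr (3/4))\<^sup>2"
    by (simp add: power_divide)
  also have "(real v powr (3/4))\<^sup>2 = real v powr (3/2)"
    by (simp add: power2_eq_square flip: powr_add)
  also have "4 * (8 * zeta54)\<^sup>2 / real v powr (3/2) = 256 * zeta54\<^sup>2 * real v powr (-3/2)"
    by (simp add: power_mult_distrib powr_minus_divide)
  finally show ?thesis .
qed

lemma AE_eventually_not_repeated_record_value:
  "AE \<omega> in M. \<forall>\<^sub>F v in sequentially. \<not> repeated_record_value (\<lambda>n. K n \<omega>) v"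
proof -
  have "AE \<omega> in M. \<forall>\<^sub>F v in sequentially.
      \<omega> \<notin> {\<omega> \<in> space M. repeated_record_value (\<lambda>n. K n \<omega>) v}"
  proof (rule AE_eventually_not_of_summable)
    show "{\<omega> \<in> space M. repeated_record_value (\<lambda>n. K n \<omega>) v} \<in> events" for v
      unfolding repeated_record_value_def by measurable
    show "\<forall>\<^sub>F v in sequentially.
        prob {\<omega> \<in> space M. repeated_record_value (\<lambda>n. K n \<omega>) v} \<le> 4 * power_law_pmf v"
      using eventually_ge_at_top[of 1]
      by (rule eventually_mono) (rule prob_repeated_record_value_le_power_law)
    show "summable (\<lambda>v. 4 * power_law_pmf v)"
      using summable_power_law_pmf by (rule summable_mult)
  qed
  then show ?thesis
    by (rule AE_mp) (auto intro!: AE_I2 elim: eventually_mono)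
qed

lemma AE_eventually_exists_greater:
  "AE \<omega> in M. \<forall>\<^sub>F i in sequentially. \<exists>n<i. i < K n \<omega>"
proof -
  have "AE \<omega> in M. \<forall>\<^sub>F v in sequentially. \<omega> \<notin> {\<omega> \<in> space M. \<forall>n<v. K n \<omega> < 2 * v}"
  proof (rule AE_eventually_not_of_summable)
    show "\<forall>\<^sub>F v in sequentially.
        prob {\<omega> \<in> space M. \<forall>n<v. K n \<omega> < 2 * v} \<le> 256 * zeta54\<^sup>2 * real v powr (-3/2)"
      using eventually_ge_at_top[of 1]
      by (rule eventually_mono) (rule prob_all_less_double_le)
    show "summable (\<lambda>v. 256 * zeta54\<^sup>2 * real v powr (-3/2))"
      by (intro summable_mult) (simp add: summable_real_powr_iff)
  qed measurable
  then show ?thesis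
  proof (rule AE_mp, intro AE_I2 impI)
    fix \<omega> assume "\<omega> \<in> space M"
      and "\<forall>\<^sub>F v in sequentially. \<omega> \<notin> {\<omega> \<in> space M. \<forall>n<v. K n \<omega> < 2 * v}"
    then have "\<forall>\<^sub>F v in sequentially. \<exists>n<v. 2 * v \<le> K n \<omega>"
      by (simp add: not_less)
    then show "\<forall>\<^sub>F i in sequentially. \<exists>n<i. i < K n \<omega>"
    proof (rule eventually_mono)
      fix i assume "\<exists>n<i. 2 * i \<le> K n \<omega>"
      then obtain n where "n < i" "2 * i \<le> K n \<omega>" by blast
      then show "\<exists>n<i. i < K n \<omega>" by (intro exI[of _ n]) simp
    qed
  qed
qed

end

theorem mainTheorem5:
  fixes M :: "'a measure" and K :: "nat \<Rightarrow> 'a \<Rightarrow> nat"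
  assumes "prob_space M"
    and "prob_space.indep_vars M (\<lambda>_. count_space UNIV) K UNIV"
    and "\<And>i k. k \<ge> 1 \<Longrightarrow>
           measure M {\<omega> \<in> space M. K i \<omega> = k} = real k powr (-5/4) / zeta54"
  shows "AE \<omega> in M. \<exists>i0. (\<forall>i\<ge>i0. record_time (\<lambda>n. K n \<omega>) i
                                   \<longrightarrow> simple_record_time (\<lambda>n. K n \<omega>) i)
                          \<and> (\<forall>i\<ge>i0. Max ((\<lambda>n. K n \<omega>) ` {..<i}) > i)"
proof -
  interpret prob_space M by (rule assms(1))
  interpret power_law_sequence M K
    by unfold_locales (use assms in \<open>simp_all add: power_law_pmf_def\<close>)
  show ?thesis
    using AE_eventually_not_repeated_record_value AE_eventually_exists_greater
  proof eventually_elim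
    case (elim \<omega>)
    then have "\<forall>\<^sub>F i in sequentially. (record_time (\<lambda>n. K n \<omega>) i \<longrightarrow> simple_record_time (\<lambda>n. K n \<omega>) i)
        \<and> Max ((\<lambda>n. K n \<omega>) ` {..<i}) > i"
      by (intro eventually_conj eventually_record_time_simple eventually_Max_gt)
    then show ?case
      unfolding eventually_sequentially by blast
  qed
qed

end
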